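(* Let $n\in\{2,3,4,5\}$, let $\zeta_n$ be a primitive $n$-th root of unity, and let $$M_q=\begin{pmatrix}\mathcal{R}(q) & \mathcal{V}(q)\\ \mathcal{S}(q) & \mathcal{U}(q)\end{pmatrix}\in G_q.$$ If the image of $M_q|_{q=1}\in\mathrm{SL}(2,\mathbb{Z})$ in $\mathrm{GL}(2,\mathbb{Z}/n\mathbb{Z})$ equals $\pm E_2$ (where $E_2$ is the identity matrix), then $\mathcal{R}(\zeta_n)=\mathcal{U}(\zeta_n)=\pm\zeta_n^j$ for some $0\le j<n$ and $\mathcal{V}(\zeta_n)=\mathcal{S}(\zeta_n)=0$.
   Context: Let $q$ be a formal parameter and let $R_q=\begin{pmatrix} q & 1\\ 0 & 1\end{pmatrix}$, $S_q=\begin{pmatrix} 0 & -q^{-1}\\ 1 & 0\end{pmatrix}\in \mathrm{GL}(2,\mathbb{Z}[q,q^{-1}])$. Let $G_q=\langle R_q,S_q\rangle$ be the group they generate. *)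

theory Defs
  imports "HOL-Analysis.Analysis" "HOL-Number_Theory.Cong"
begin

definition mat2 :: "complex \<Rightarrow> complex \<Rightarrow> complex \<Rightarrow> complex \<Rightarrow> complex^2^2" where
  "mat2 a b c d = (\<chi> i j. if i = 1 then (if j = 1 then a else b) else (if j = 1 then c else d))"

text \<open>Entries of a matrix of Laurent polynomials in Z[q,q^-1] are represented as
  functions of q; such a Laurent polynomial is determined by its values at all q \<noteq> 0.\<close>
definition Rq :: "complex \<Rightarrow> complex^2^2" where
  "Rq q = mat2 q 1 0 1"
definition Sq :: "complex \<Rightarrow> complex^2^2" where
  "Sq q = mat2 0 (- inverse q) 1 0"
definition Rq_inv :: "complex \<Rightarrow> complex^2^2" where
  "Rq_inv q = mat2 (inverse q) (- inverse q) 0 1"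
definition Sq_inv :: "complex \<Rightarrow> complex^2^2" where
  "Sq_inv q = mat2 0 1 (- q) 0"

datatype gen = GR | GRi | GS | GSi

fun gen_mat :: "gen \<Rightarrow> complex \<Rightarrow> complex^2^2" where
  "gen_mat GR = Rq" | "gen_mat GRi = Rq_inv" | "gen_mat GS = Sq" | "gen_mat GSi = Sq_inv"

fun word_mat :: "gen list \<Rightarrow> complex \<Rightarrow> complex^2^2" where
  "word_mat [] q = mat 1"
| "word_mat (g # w) q = gen_mat g q ** word_mat w q"

definition Gq :: "(complex \<Rightarrow> complex^2^2) set" where
  "Gq = {M. \<exists>w. \<forall>q. q \<noteq> 0 \<longrightarrow> M q = word_mat w q}"

definition primitive_root_of_unity :: "nat \<Rightarrow> complex \<Rightarrow> bool" where
  "primitive_root_of_unity n z \<longleftrightarrow> n > 0 \<and> z ^ n = 1 \<and> (\<forall>k. 0 < k \<and> k < n \<longrightarrow> z ^ k \<noteq> 1)"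

end

theory Submission
  imports Defs "HOL-Computational_Algebra.Polynomial"
begin

text \<open>
  At a primitive \<open>n\<close>-th root of unity \<open>\<zeta>\<close> we have \<open>\<zeta>\<^sup>-\<^sup>1 = \<zeta>\<^bsup>n-1\<^esup>\<close>, so the generators of \<open>G\<^sub>q\<close>
  evaluated at \<open>\<zeta>\<close> are matrices over \<open>\<int>[q]/(F)\<close>, where \<open>F\<close> is the cyclotomic polynomial of
  order \<open>n\<close>. For \<open>n \<le> 5\<close> a finite table certifies the claim: its entries are pairs \<open>(A, B)\<close> of
  an integer matrix and a matrix over \<open>\<int>[q]\<close>, one for each element \<open>\<plusminus>A\<close> of \<open>PSL(2, \<int>/n)\<close>
  (6, 12, 24 and 60 entries), starting with \<open>(I, I)\<close>, and left multiplication by each generator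
  maps every entry to another one, up to sign modulo \<open>n\<close> in the first component and up to a
  factor \<open>\<plusminus>q\<^sup>j\<close> modulo \<open>F\<close> in the second. By induction over words, every \<open>M \<in> G\<^sub>q\<close> has
  \<open>M(1) \<equiv> \<plusminus>A (mod n)\<close> and \<open>M(\<zeta>) = \<plusminus>\<zeta>\<^sup>j B(\<zeta>)\<close> for a common entry \<open>(A, B)\<close>; if
  \<open>M(1) \<equiv> \<plusminus>I\<close>, that entry must be \<open>(I, I)\<close>.
\<close>

lemma mat2_mult:
  "mat2 a b c d ** mat2 e f g h = mat2 (a*e + b*g) (a*f + b*h) (c*e + d*g) (c*f + d*h)"
  unfolding mat2_def matrix_matrix_mult_def by (simp add: vec_eq_iff sum_2 forall_2)

lemma mat2_eq_iff: "mat2 a b c d = mat2 e f g h \<longleftrightarrow> a = e \<and> b = f \<and> c = g \<and> d = h"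
  unfolding mat2_def by (auto simp: vec_eq_iff forall_2)

lemma mat_eq_mat2: "mat c = mat2 c 0 0 c"
  unfolding mat2_def mat_def by (simp add: vec_eq_iff forall_2)

lemma mat_mult_mat: "mat a ** mat b = (mat (a * b) :: 'a::semiring_1^'n^'n)"
proof -
  have "(\<Sum>k\<in>UNIV. (if i = k then a else 0) * (if k = j then b else 0)) = (if i = j then a * b else 0)"
    for i j :: 'n
  proof -
    have "(\<Sum>k\<in>UNIV. (if i = k then a else 0) * (if k = j then b else 0))
        = (\<Sum>k\<in>UNIV. if k = i then a * (if k = j then b else 0) else 0)"
      by (rule sum.cong) auto
    then show ?thesis by simp
  qed
  then show ?thesis
    by (simp add: matrix_matrix_mult_def mat_def vec_eq_iff)
qed

lemma mat_mult_commute: "A ** mat c = mat c ** (A :: 'a::comm_semiring_1^'n^'n)"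
  unfolding matrix_matrix_mult_def mat_def
  by (simp add: vec_eq_iff if_distrib if_distribR mult.commute cong: if_cong)

lemma power_mod_eq_if_power_eq_1:
  fixes z :: "'a::monoid_mult"
  assumes "z ^ n = 1"
  shows "z ^ (j mod n) = z ^ j"
proof -
  have "z ^ j = z ^ (n * (j div n) + j mod n)"
    by simp
  also have "\<dots> = (z ^ n) ^ (j div n) * z ^ (j mod n)"
    by (simp only: power_add power_mult)
  finally show ?thesis
    using assms by simp
qed

lemma list_all2_ex_right:
  assumes "list_all2 P xs ys" and "x \<in> set xs"
  shows "\<exists>y \<in> set ys. P x y"
  using assms by (induction rule: list_all2_induct) auto

definition eval_int_poly :: "'a::comm_ring_1 \<Rightarrow> int poly \<Rightarrow> 'a" where
  "eval_int_poly z p = poly (map_poly of_int p) z"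

lemma eval_int_poly_0 [simp]: "eval_int_poly z 0 = 0"
  by (simp add: eval_int_poly_def)

lemma eval_int_poly_pCons [simp]: "eval_int_poly z (pCons a p) = of_int a + z * eval_int_poly z p"
  by (simp add: eval_int_poly_def map_poly_pCons)

lemma eval_int_poly_1 [simp]: "eval_int_poly z 1 = 1"
  by (simp add: eval_int_poly_def)

lemma eval_int_poly_add [simp]:
  "eval_int_poly z (p + q) = eval_int_poly z p + eval_int_poly z q"
proof -
  have "map_poly (of_int :: int \<Rightarrow> 'a) (p + q) = map_poly of_int p + map_poly of_int q"
    by (rule poly_eqI) (simp add: coeff_map_poly)
  then show ?thesis by (simp add: eval_int_poly_def)
qed

lemma eval_int_poly_smult [simp]: "eval_int_poly z (smult a p) = of_int a * eval_int_poly z p"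
proof -
  have "map_poly (of_int :: int \<Rightarrow> 'a) (smult a p) = smult (of_int a) (map_poly of_int p)"
    by (rule poly_eqI) (simp add: coeff_map_poly)
  then show ?thesis by (simp add: eval_int_poly_def)
qed

lemma eval_int_poly_uminus [simp]: "eval_int_poly z (- p) = - eval_int_poly z p"
  using eval_int_poly_smult[of z "-1" p] by simp

lemma eval_int_poly_diff [simp]: "eval_int_poly z (p - q) = eval_int_poly z p - eval_int_poly z q"
  using eval_int_poly_add[of z p "- q"] by simp

lemma eval_int_poly_mult [simp]: "eval_int_poly z (p * q) = eval_int_poly z p * eval_int_poly z q"
  by (induction p) (simp_all add: algebra_simps)

lemma eval_int_poly_monom [simp]: "eval_int_poly z (monom 1 j) = z ^ j"
  by (induction j) (simp_all add: monom_Suc)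

lemma eval_int_poly_pseudo_mod:
  assumes "lead_coeff F = 1" and "eval_int_poly z F = 0"
  shows "eval_int_poly z (pseudo_mod p F) = eval_int_poly z p"
proof -
  obtain q r where qr: "pseudo_divmod p F = (q, r)"
    by (cases "pseudo_divmod p F")
  have "F \<noteq> 0"
    using assms(1) by auto
  from pseudo_divmod(1)[OF this qr] assms(1) have "p = F * q + r"
    by simp
  with qr assms(2) show ?thesis by (simp add: pseudo_mod_def)
qed

lemma eval_int_poly_cofactor_root:
  assumes "primitive_root_of_unity n z" and "0 < d" and "d < n"
    and "(monom 1 d - 1) * F = monom 1 n - 1"
  shows "eval_int_poly z F = 0"
proof -
  from assms(1) have "z ^ n = 1" and "z ^ d \<noteq> 1"
    using assms(2,3) by (auto simp: primitive_root_of_unity_def)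
  moreover have "(z ^ d - 1) * eval_int_poly z F = z ^ n - 1"
    using arg_cong[OF assms(4), of "eval_int_poly z"] by simp
  ultimately show ?thesis by simp
qed

subsection \<open>Matrices up to a factor \<open>\<plusminus>z\<^sup>j\<close>\<close>

definition pm_power_multiple :: "'a::comm_ring_1 \<Rightarrow> 'a^'n^'n \<Rightarrow> 'a^'n^'n \<Rightarrow> bool" where
  "pm_power_multiple z M N \<longleftrightarrow> (\<exists>s \<in> {1, -1::int}. \<exists>j. M = mat (of_int s * z ^ j) ** N)"

lemma pm_power_multiple_refl: "pm_power_multiple z M M"
  unfolding pm_power_multiple_def by (rule bexI[of _ 1], rule exI[of _ 0]) simp_all

lemma pm_power_multiple_trans:
  assumes "pm_power_multiple z L M" and "pm_power_multiple z M N"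
  shows "pm_power_multiple z L N"
proof -
  obtain s j t k where s: "s \<in> {1, -1}" and t: "t \<in> {1, -1}"
    and "L = mat (of_int s * z ^ j) ** M" and "M = mat (of_int t * z ^ k) ** N"
    using assms unfolding pm_power_multiple_def by blast
  then have "L = mat (of_int (s * t) * z ^ (j + k)) ** N"
    by (simp add: matrix_mul_assoc mat_mult_mat power_add mult_ac)
  moreover have "s * t \<in> {1, -1}" using s t by auto
  ultimately show ?thesis unfolding pm_power_multiple_def by blast
qed

lemma pm_power_multiple_mult_left:
  assumes "pm_power_multiple z M N"
  shows "pm_power_multiple z (G ** M) (G ** N)"
proof -
  obtain s j where "s \<in> {1, -1}" and "M = mat (of_int s * z ^ j) ** N"
    using assms unfolding pm_power_multiple_def by blast
  then have "G ** M = mat (of_int s * z ^ j) ** (G ** N)"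
    by (simp only: matrix_mul_assoc mat_mult_commute)
  with \<open>s \<in> {1, -1}\<close> show ?thesis
    unfolding pm_power_multiple_def by blast
qed

subsection \<open>Integer matrices modulo \<open>n\<close> and up to sign\<close>

text \<open>\<open>2 \<times> 2\<close> matrices are stored as row-major 4-tuples, so that the certificates below can be
  checked by evaluation.\<close>

type_synonym zmat2 = "int \<times> int \<times> int \<times> int"

fun zmat2_mult :: "zmat2 \<Rightarrow> zmat2 \<Rightarrow> zmat2" where
  "zmat2_mult (a, b, c, d) (e, f, g, h) = (a*e + b*g, a*f + b*h, c*e + d*g, c*f + d*h)"

fun zmat2_scale :: "int \<Rightarrow> zmat2 \<Rightarrow> zmat2" where
  "zmat2_scale s (a, b, c, d) = (s*a, s*b, s*c, s*d)"

fun zmat2_mod :: "nat \<Rightarrow> zmat2 \<Rightarrow> zmat2" where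
  "zmat2_mod n (a, b, c, d) = (a mod int n, b mod int n, c mod int n, d mod int n)"

fun zmat2_to_mat :: "zmat2 \<Rightarrow> complex^2^2" where
  "zmat2_to_mat (a, b, c, d) = mat2 (of_int a) (of_int b) (of_int c) (of_int d)"

lemma zmat2_to_mat_mult: "zmat2_to_mat A ** zmat2_to_mat B = zmat2_to_mat (zmat2_mult A B)"
  by (cases A; cases B) (simp add: mat2_mult)

lemma zmat2_to_mat_eq_mat2_iff:
  "zmat2_to_mat A = mat2 (of_int a) (of_int b) (of_int c) (of_int d) \<longleftrightarrow> A = (a, b, c, d)"
  by (cases A) (simp add: mat2_eq_iff)

lemma zmat2_mult_scale: "zmat2_mult A (zmat2_scale s B) = zmat2_scale s (zmat2_mult A B)"
  by (cases A; cases B) (simp add: algebra_simps)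

lemma zmat2_scale_scale: "zmat2_scale s (zmat2_scale t A) = zmat2_scale (s * t) A"
  by (cases A) (simp add: algebra_simps)

lemma zmat2_scale_1: "zmat2_scale 1 A = A"
  by (cases A) simp

lemma zmat2_mod_mult_mod: "zmat2_mod n (zmat2_mult A (zmat2_mod n B)) = zmat2_mod n (zmat2_mult A B)"
  by (cases A; cases B) (simp add: mod_add_cong[OF mod_mult_right_eq mod_mult_right_eq])

lemma zmat2_mod_scale_mod: "zmat2_mod n (zmat2_scale s (zmat2_mod n A)) = zmat2_mod n (zmat2_scale s A)"
  by (cases A) (simp add: mod_simps)

definition zmat2_cong_pm :: "nat \<Rightarrow> zmat2 \<Rightarrow> zmat2 \<Rightarrow> bool" where
  "zmat2_cong_pm n A B \<longleftrightarrow> (\<exists>\<sigma> \<in> {1, -1}. zmat2_mod n A = zmat2_mod n (zmat2_scale \<sigma> B))"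

lemma zmat2_cong_pm_refl: "zmat2_cong_pm n A A"
  unfolding zmat2_cong_pm_def by (auto simp: zmat2_scale_1)

lemma zmat2_cong_pm_sym:
  assumes "zmat2_cong_pm n A B"
  shows "zmat2_cong_pm n B A"
proof -
  obtain \<sigma> where \<sigma>: "\<sigma> \<in> {1, -1}" and AB: "zmat2_mod n A = zmat2_mod n (zmat2_scale \<sigma> B)"
    using assms by (auto simp: zmat2_cong_pm_def)
  have "zmat2_mod n (zmat2_scale \<sigma> A) = zmat2_mod n (zmat2_scale \<sigma> (zmat2_mod n A))"
    by (rule zmat2_mod_scale_mod[symmetric])
  also have "\<dots> = zmat2_mod n (zmat2_scale \<sigma> (zmat2_scale \<sigma> B))"
    by (simp only: AB zmat2_mod_scale_mod)
  also have "\<dots> = zmat2_mod n B"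
    using \<sigma> by (auto simp: zmat2_scale_scale zmat2_scale_1)
  finally have "zmat2_mod n B = zmat2_mod n (zmat2_scale \<sigma> A)"
    by (rule sym)
  with \<sigma> show ?thesis
    unfolding zmat2_cong_pm_def by blast
qed

lemma zmat2_cong_pm_trans:
  assumes "zmat2_cong_pm n A B" and "zmat2_cong_pm n B C"
  shows "zmat2_cong_pm n A C"
proof -
  obtain \<sigma> \<tau> where \<sigma>: "\<sigma> \<in> {1, -1}" and \<tau>: "\<tau> \<in> {1, -1}"
    and AB: "zmat2_mod n A = zmat2_mod n (zmat2_scale \<sigma> B)"
    and BC: "zmat2_mod n B = zmat2_mod n (zmat2_scale \<tau> C)"
    using assms by (auto simp: zmat2_cong_pm_def)
  have "zmat2_mod n A = zmat2_mod n (zmat2_scale \<sigma> (zmat2_mod n B))"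
    by (simp only: AB zmat2_mod_scale_mod)
  also have "\<dots> = zmat2_mod n (zmat2_scale (\<sigma> * \<tau>) C)"
    by (simp only: BC zmat2_mod_scale_mod zmat2_scale_scale)
  finally have "zmat2_mod n A = zmat2_mod n (zmat2_scale (\<sigma> * \<tau>) C)" .
  moreover have "\<sigma> * \<tau> \<in> {1, -1}"
    using \<sigma> \<tau> by auto
  ultimately show ?thesis
    unfolding zmat2_cong_pm_def by blast
qed

lemma zmat2_cong_pm_mult_left:
  assumes "zmat2_cong_pm n A B"
  shows "zmat2_cong_pm n (zmat2_mult G A) (zmat2_mult G B)"
proof -
  obtain \<sigma> where \<sigma>: "\<sigma> \<in> {1, -1}" and AB: "zmat2_mod n A = zmat2_mod n (zmat2_scale \<sigma> B)"
    using assms by (auto simp: zmat2_cong_pm_def)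
  have "zmat2_mod n (zmat2_mult G A) = zmat2_mod n (zmat2_mult G (zmat2_mod n A))"
    by (simp only: zmat2_mod_mult_mod)
  also have "\<dots> = zmat2_mod n (zmat2_scale \<sigma> (zmat2_mult G B))"
    by (simp only: AB zmat2_mod_mult_mod zmat2_mult_scale)
  finally show ?thesis
    using \<sigma> unfolding zmat2_cong_pm_def by blast
qed

type_synonym pmat2 = "int poly \<times> int poly \<times> int poly \<times> int poly"

fun pmat2_mult :: "pmat2 \<Rightarrow> pmat2 \<Rightarrow> pmat2" where
  "pmat2_mult (a, b, c, d) (e, f, g, h) = (a*e + b*g, a*f + b*h, c*e + d*g, c*f + d*h)"

fun pmat2_scale :: "int \<Rightarrow> nat \<Rightarrow> pmat2 \<Rightarrow> pmat2" where
  "pmat2_scale s j (a, b, c, d) =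
     (smult s (monom 1 j * a), smult s (monom 1 j * b), smult s (monom 1 j * c), smult s (monom 1 j * d))"

fun pmat2_pseudo_mod :: "int poly \<Rightarrow> pmat2 \<Rightarrow> pmat2" where
  "pmat2_pseudo_mod F (a, b, c, d) = (pseudo_mod a F, pseudo_mod b F, pseudo_mod c F, pseudo_mod d F)"

fun pmat2_eval :: "complex \<Rightarrow> pmat2 \<Rightarrow> complex^2^2" where
  "pmat2_eval z (a, b, c, d) =
     mat2 (eval_int_poly z a) (eval_int_poly z b) (eval_int_poly z c) (eval_int_poly z d)"

lemma pmat2_eval_mult: "pmat2_eval z (pmat2_mult A B) = pmat2_eval z A ** pmat2_eval z B"
  by (cases A; cases B) (simp add: mat2_mult)

lemma pmat2_eval_scale: "pmat2_eval z (pmat2_scale s j A) = mat (of_int s * z ^ j) ** pmat2_eval z A"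
  by (cases A) (simp add: mat_eq_mat2 mat2_mult mult_ac)

lemma pmat2_eval_pseudo_mod:
  assumes "lead_coeff F = 1" and "eval_int_poly z F = 0"
  shows "pmat2_eval z (pmat2_pseudo_mod F A) = pmat2_eval z A"
  by (cases A) (simp add: eval_int_poly_pseudo_mod[OF assms])

fun gen_zmat :: "gen \<Rightarrow> zmat2" where
  "gen_zmat GR = (1, 1, 0, 1)"
| "gen_zmat GRi = (1, -1, 0, 1)"
| "gen_zmat GS = (0, -1, 1, 0)"
| "gen_zmat GSi = (0, 1, -1, 0)"

text \<open>At an \<open>n\<close>-th root of unity, \<open>q\<^sup>-\<^sup>1\<close> is replaced by \<open>q\<^bsup>n-1\<^esup>\<close>.\<close>

fun gen_pmat :: "nat \<Rightarrow> gen \<Rightarrow> pmat2" where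
  "gen_pmat n GR = ([:0, 1:], 1, 0, 1)"
| "gen_pmat n GRi = (monom 1 (n - 1), - monom 1 (n - 1), 0, 1)"
| "gen_pmat n GS = (0, - monom 1 (n - 1), 1, 0)"
| "gen_pmat n GSi = (0, 1, [:0, -1:], 0)"

fun word_zmat :: "gen list \<Rightarrow> zmat2" where
  "word_zmat [] = (1, 0, 0, 1)"
| "word_zmat (g # w) = zmat2_mult (gen_zmat g) (word_zmat w)"

lemma word_mat_1: "word_mat w 1 = zmat2_to_mat (word_zmat w)"
proof (induction w)
  case Nil
  then show ?case by (simp add: mat_eq_mat2)
next
  case (Cons g w)
  have "gen_mat g 1 = zmat2_to_mat (gen_zmat g)"
    by (cases g) (simp_all add: Rq_def Sq_def Rq_inv_def Sq_inv_def)
  with Cons show ?case by (simp add: zmat2_to_mat_mult)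
qed

lemma gen_mat_root_of_unity:
  assumes "z ^ n = 1" and "0 < n"
  shows "gen_mat g z = pmat2_eval z (gen_pmat n g)"
proof -
  have "z * z ^ (n - 1) = 1"
    using assms by (cases n) simp_all
  then have "inverse z = z ^ (n - 1)"
    by (rule inverse_unique)
  then show ?thesis
    by (cases g) (simp_all add: Rq_def Sq_def Rq_inv_def Sq_inv_def)
qed

subsection \<open>Certified tables\<close>

fun certified_step ::
  "nat \<Rightarrow> int poly \<Rightarrow> (zmat2 \<times> pmat2) list \<Rightarrow> zmat2 \<times> pmat2 \<Rightarrow> gen \<Rightarrow> nat \<times> int \<times> nat \<Rightarrow> bool"
where
  "certified_step n F table (A, B) g (k, s, j) \<longleftrightarrow>
     k < length table \<and> s \<in> {1, -1} \<and>
     zmat2_cong_pm n (zmat2_mult (gen_zmat g) A) (fst (table ! k)) \<and>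
     pmat2_pseudo_mod F (pmat2_mult (gen_pmat n g) B) =
       pmat2_pseudo_mod F (pmat2_scale s j (snd (table ! k)))"

definition table_certificate ::
  "nat \<Rightarrow> int poly \<Rightarrow> (zmat2 \<times> pmat2) list \<Rightarrow> (nat \<times> int \<times> nat) list list \<Rightarrow> bool"
where
  "table_certificate n F table cert \<longleftrightarrow>
     table \<noteq> [] \<and> hd table = ((1, 0, 0, 1), (1, 0, 0, 1)) \<and>
     list_all2 (\<lambda>e row. list_all2 (certified_step n F table e) [GR, GRi, GS, GSi] row) table cert \<and>
     list_all (\<lambda>e. \<not> zmat2_cong_pm n (fst e) (1, 0, 0, 1)) (tl table)"

lemma table_certificate_step:
  assumes "table_certificate n F table cert" and "i < length table"
  obtains k s j where "certified_step n F table (table ! i) g (k, s, j)"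
proof -
  have "g \<in> set [GR, GRi, GS, GSi]"
    by (cases g) simp_all
  moreover obtain row where "list_all2 (certified_step n F table (table ! i)) [GR, GRi, GS, GSi] row"
    using assms list_all2_ex_right[of _ table cert "table ! i"] by (auto simp: table_certificate_def)
  ultimately show ?thesis
    using that list_all2_ex_right by (metis prod_cases3)
qed

lemma certified_step_root_of_unity:
  assumes "certified_step n F table (A, B) g (k, s, j)"
    and F: "lead_coeff F = 1" "eval_int_poly z F = 0"
    and z: "z ^ n = 1" "0 < n"
  shows "pm_power_multiple z (gen_mat g z ** pmat2_eval z B) (pmat2_eval z (snd (table ! k)))"
proof -
  have "gen_mat g z ** pmat2_eval z B = pmat2_eval z (pmat2_pseudo_mod F (pmat2_mult (gen_pmat n g) B))"
    by (simp only: pmat2_eval_pseudo_mod[OF F] pmat2_eval_mult gen_mat_root_of_unity[OF z])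
  also have "\<dots> = pmat2_eval z (pmat2_pseudo_mod F (pmat2_scale s j (snd (table ! k))))"
    using assms(1) by simp
  also have "\<dots> = mat (of_int s * z ^ j) ** pmat2_eval z (snd (table ! k))"
    by (simp only: pmat2_eval_pseudo_mod[OF F] pmat2_eval_scale)
  finally show ?thesis
    using assms(1) unfolding pm_power_multiple_def by auto
qed

lemma table_certificate_covers_words:
  assumes cert: "table_certificate n F table cert"
    and F: "lead_coeff F = 1" "eval_int_poly z F = 0"
    and z: "z ^ n = 1" "0 < n"
  shows "\<exists>i < length table. zmat2_cong_pm n (word_zmat w) (fst (table ! i)) \<and>
           pm_power_multiple z (word_mat w z) (pmat2_eval z (snd (table ! i)))"
proof (induction w)
  case Nil
  have "table ! 0 = ((1, 0, 0, 1), (1, 0, 0, 1))" and "0 < length table"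
    using cert by (auto simp: table_certificate_def hd_conv_nth)
  then show ?case
    by (auto simp: zmat2_cong_pm_refl pm_power_multiple_refl mat_eq_mat2 intro!: exI[of _ 0])
next
  case (Cons g w)
  then obtain i where i: "i < length table"
    and int: "zmat2_cong_pm n (word_zmat w) (fst (table ! i))"
    and root: "pm_power_multiple z (word_mat w z) (pmat2_eval z (snd (table ! i)))"
    by blast
  obtain A B where AB: "table ! i = (A, B)"
    by (cases "table ! i")
  obtain k s j where step: "certified_step n F table (A, B) g (k, s, j)"
    using table_certificate_step[OF cert i, of g] unfolding AB .
  have "zmat2_cong_pm n (word_zmat (g # w)) (fst (table ! k))"
    using zmat2_cong_pm_trans[OF zmat2_cong_pm_mult_left[OF int[unfolded AB fst_conv]]] step
    by simp
  moreover have "pm_power_multiple z (word_mat (g # w) z) (pmat2_eval z (snd (table ! k)))"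
    using pm_power_multiple_trans[OF pm_power_multiple_mult_left[OF root[unfolded AB snd_conv]]]
      certified_step_root_of_unity[OF step F z]
    by simp
  moreover have "k < length table"
    using step by simp
  ultimately show ?case
    by blast
qed

lemma table_certificate_scalar_if_cong_identity:
  assumes cert: "table_certificate n F table cert"
    and "lead_coeff F = 1" "eval_int_poly z F = 0" "z ^ n = 1" "0 < n"
    and "zmat2_cong_pm n (word_zmat w) (1, 0, 0, 1)"
  shows "pm_power_multiple z (word_mat w z) (mat 1)"
proof -
  obtain i where i: "i < length table"
    and int: "zmat2_cong_pm n (word_zmat w) (fst (table ! i))"
    and root: "pm_power_multiple z (word_mat w z) (pmat2_eval z (snd (table ! i)))"
    using table_certificate_covers_words[OF assms(1-5)] by blast
  have "zmat2_cong_pm n (fst (table ! i)) (1, 0, 0, 1)"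
    using zmat2_cong_pm_sym[OF int] assms(6) by (rule zmat2_cong_pm_trans)
  have "i = 0"
  proof (rule ccontr)
    assume "i \<noteq> 0"
    then obtain i' where "i = Suc i'"
      by (cases i) simp_all
    with i have "tl table ! i' = table ! i" and "i' < length (tl table)"
      by (simp_all add: nth_tl)
    then have "table ! i \<in> set (tl table)"
      by (metis nth_mem)
    with cert have "\<not> zmat2_cong_pm n (fst (table ! i)) (1, 0, 0, 1)"
      by (auto simp: table_certificate_def list_all_iff)
    with \<open>zmat2_cong_pm n (fst (table ! i)) (1, 0, 0, 1)\<close> show False
      by contradiction
  qed
  moreover have "table ! 0 = ((1, 0, 0, 1), (1, 0, 0, 1))"
    using cert by (auto simp: table_certificate_def hd_conv_nth)
  ultimately show ?thesis
    using root by (simp add: mat_eq_mat2)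
qed

definition table2 :: "(zmat2 \<times> pmat2) list" where
  "table2 = [((1,0,0,1),([:1:],0,0,[:1:])),
    ((1,1,0,1),([:-1:],[:1:],0,[:1:])),
    ((0,1,1,0),(0,[:1:],[:1:],0)),
    ((0,1,1,1),(0,[:1:],[:-1:],[:1:])),
    ((1,1,1,0),([:1:],[:-1:],[:1:],0)),
    ((1,0,1,1),([:-1:],0,[:-1:],[:1:]))]"

definition certificate2 :: "(nat \<times> int \<times> nat) list list" where
  "certificate2 = [[(1,1,0),(1,1,0),(2,1,0),(2,1,0)],
    [(0,1,0),(0,1,0),(3,1,0),(3,1,0)],
    [(4,1,0),(4,1,0),(0,1,0),(0,1,0)],
    [(5,1,0),(5,1,0),(1,1,0),(1,1,0)],
    [(2,1,0),(2,1,0),(5,1,1),(5,1,1)],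
    [(3,1,0),(3,1,0),(4,1,1),(4,1,1)]]"

definition table3 :: "(zmat2 \<times> pmat2) list" where
  "table3 = [((1,0,0,1),([:1:],0,0,[:1:])),
    ((1,1,0,1),([:0,1:],[:1:],0,[:1:])),
    ((1,2,0,1),([:-1,-1:],[:1,1:],0,[:1:])),
    ((0,2,1,0),(0,[:1,1:],[:1:],0)),
    ((0,2,1,1),(0,[:1,1:],[:0,1:],[:1:])),
    ((0,2,1,2),(0,[:1,1:],[:-1,-1:],[:1,1:])),
    ((1,2,1,0),([:1:],[:-1:],[:1:],0)),
    ((2,2,1,0),([:1,1:],[:0,-1:],[:1:],0)),
    ((1,0,1,1),([:0,1:],0,[:0,1:],[:1:])),
    ((2,1,1,1),([:-1:],[:1:],[:0,1:],[:1:])),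
    ((1,1,1,2),([:-1,-1:],[:0,1:],[:-1,-1:],[:1,1:])),
    ((2,0,1,2),([:0,-1:],0,[:-1,-1:],[:1,1:]))]"

definition certificate3 :: "(nat \<times> int \<times> nat) list list" where
  "certificate3 = [[(1,1,0),(2,1,0),(3,1,0),(3,-1,1)],
    [(2,1,0),(0,1,0),(4,1,0),(4,-1,1)],
    [(0,1,0),(1,1,0),(5,1,0),(5,-1,1)],
    [(6,1,0),(7,1,0),(0,-1,2),(0,1,0)],
    [(8,1,0),(9,1,0),(1,-1,2),(1,1,0)],
    [(10,1,0),(11,1,0),(2,-1,2),(2,1,0)],
    [(7,1,0),(3,1,0),(11,1,1),(11,-1,2)],
    [(3,1,0),(6,1,0),(8,-1,1),(8,1,2)],
    [(9,1,0),(4,1,0),(7,1,1),(7,-1,2)],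
    [(4,1,0),(8,1,0),(10,-1,1),(10,1,2)],
    [(11,1,0),(5,1,0),(9,1,1),(9,-1,2)],
    [(5,1,0),(10,1,0),(6,-1,1),(6,1,2)]]"

definition table4 :: "(zmat2 \<times> pmat2) list" where
  "table4 = [((1,0,0,1),([:1:],0,0,[:1:])),
    ((1,1,0,1),([:0,1:],[:1:],0,[:1:])),
    ((1,3,0,1),([:0,-1:],[:0,1:],0,[:1:])),
    ((0,3,1,0),(0,[:0,1:],[:1:],0)),
    ((1,2,0,1),([:-1:],[:1,1:],0,[:1:])),
    ((0,3,1,1),(0,[:0,1:],[:0,1:],[:1:])),
    ((0,3,1,3),(0,[:0,1:],[:0,-1:],[:0,1:])),
    ((1,3,1,0),([:1:],[:-1:],[:1:],0)),
    ((3,3,1,0),([:0,1:],[:1:],[:1:],0)),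
    ((0,3,1,2),(0,[:0,1:],[:-1:],[:1,1:])),
    ((1,0,1,1),([:0,1:],0,[:0,1:],[:1:])),
    ((3,2,1,1),([:-1:],[:1,1:],[:0,1:],[:1:])),
    ((1,2,1,3),([:0,-1:],[:-1,1:],[:0,-1:],[:0,1:])),
    ((3,0,1,3),([:1:],0,[:0,-1:],[:0,1:])),
    ((2,3,1,0),([:1,1:],[:0,-1:],[:1:],0)),
    ((1,1,1,2),([:-1:],[:0,1:],[:-1:],[:1,1:])),
    ((3,1,1,2),([:0,-1:],[:0,1:],[:-1:],[:1,1:])),
    ((2,1,1,1),([:-1,1:],[:1:],[:0,1:],[:1:])),
    ((2,1,1,3),([:1,-1:],[:-1:],[:0,-1:],[:0,1:])),
    ((3,0,2,3),([:0,1:],0,[:1,1:],[:0,-1:])),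
    ((2,3,1,2),([:-1,-1:],[:0,1:],[:-1:],[:1,1:])),
    ((3,3,2,1),([:-1:],[:0,1:],[:-1,1:],[:1:])),
    ((3,1,2,1),([:1:],[:-1:],[:1,-1:],[:-1:])),
    ((3,2,2,3),([:0,-1:],[:-1,1:],[:-1,-1:],[:0,1:]))]"

definition certificate4 :: "(nat \<times> int \<times> nat) list list" where
  "certificate4 = [[(1,1,0),(2,1,0),(3,1,0),(3,1,3)],
    [(4,1,0),(0,1,0),(5,1,0),(5,1,3)],
    [(0,1,0),(4,1,0),(6,1,0),(6,1,3)],
    [(7,1,0),(8,1,0),(0,1,1),(0,1,0)],
    [(2,1,0),(1,1,0),(9,1,0),(9,1,3)],
    [(10,1,0),(11,1,0),(1,1,1),(1,1,0)],
    [(12,1,0),(13,1,0),(2,1,1),(2,1,0)],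
    [(14,1,0),(3,1,0),(13,1,1),(13,1,0)],
    [(3,1,0),(14,1,0),(10,1,0),(10,1,3)],
    [(15,1,0),(16,1,0),(4,1,1),(4,1,0)],
    [(17,1,0),(5,1,0),(8,1,1),(8,1,0)],
    [(5,1,0),(17,1,0),(15,1,0),(15,1,3)],
    [(18,1,0),(6,1,0),(16,1,1),(16,1,0)],
    [(6,1,0),(18,1,0),(7,1,0),(7,1,3)],
    [(8,1,0),(7,1,0),(19,1,0),(19,1,3)],
    [(20,1,0),(9,1,0),(11,1,1),(11,1,0)],
    [(9,1,0),(20,1,0),(12,1,0),(12,1,3)],
    [(11,1,0),(10,1,0),(21,1,0),(21,1,3)],
    [(13,1,0),(12,1,0),(22,1,0),(22,1,3)],
    [(22,1,1),(21,1,3),(14,1,1),(14,1,0)],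
    [(16,1,0),(15,1,0),(23,1,0),(23,1,3)],
    [(19,1,1),(23,1,3),(17,1,1),(17,1,0)],
    [(23,1,1),(19,1,3),(18,1,1),(18,1,0)],
    [(21,1,1),(22,1,3),(20,1,1),(20,1,0)]]"

definition table5 :: "(zmat2 \<times> pmat2) list" where
  "table5 = [((1,0,0,1),([:1:],0,0,[:1:])),
    ((1,1,0,1),([:0,1:],[:1:],0,[:1:])),
    ((1,4,0,1),([:-1,-1,-1,-1:],[:1,1,1,1:],0,[:1:])),
    ((0,4,1,0),(0,[:1,1,1,1:],[:1:],0)),
    ((1,2,0,1),([:0,0,1:],[:1,1:],0,[:1:])),
    ((0,4,1,1),(0,[:1,1,1,1:],[:0,1:],[:1:])),
    ((1,3,0,1),([:0,0,0,1:],[:1,1,1:],0,[:1:])),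
    ((0,4,1,4),(0,[:1,1,1,1:],[:-1,-1,-1,-1:],[:1,1,1,1:])),
    ((1,4,1,0),([:1:],[:-1:],[:1:],0)),
    ((4,4,1,0),([:1,1,1,1:],[:0,0,0,-1:],[:1:],0)),
    ((0,4,1,2),(0,[:1,1,1,1:],[:0,0,1:],[:1,1:])),
    ((1,0,1,1),([:0,1:],0,[:0,1:],[:1:])),
    ((4,3,1,1),([:-1:],[:1,1,1:],[:0,1:],[:1:])),
    ((0,4,1,3),(0,[:1,1,1,1:],[:0,0,0,1:],[:1,1,1:])),
    ((1,3,1,4),([:-1,-1,-1,-1:],[:0,1,1,1:],[:-1,-1,-1,-1:],[:1,1,1,1:])),
    ((4,0,1,4),([:0,0,0,-1:],0,[:-1,-1,-1,-1:],[:1,1,1,1:])),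
    ((2,4,1,0),([:1,1:],[:0,-1:],[:1:],0)),
    ((3,4,1,0),([:1,1,1:],[:0,0,-1:],[:1:],0)),
    ((1,1,1,2),([:0,0,1:],[:0,1:],[:0,0,1:],[:1,1:])),
    ((4,2,1,2),([:0,-1:],[:0,1,1:],[:0,0,1:],[:1,1:])),
    ((2,1,1,1),([:0,1,1:],[:1:],[:0,1:],[:1:])),
    ((3,2,1,1),([:0,1,1,1:],[:1,1:],[:0,1:],[:1:])),
    ((1,2,1,3),([:0,0,0,1:],[:0,1,1:],[:0,0,0,1:],[:1,1,1:])),
    ((4,1,1,3),([:0,0,-1:],[:0,0,1:],[:0,0,0,1:],[:1,1,1:])),
    ((2,2,1,4),([:0,-1,-1,-1:],[:0,0,1,1:],[:-1,-1,-1,-1:],[:1,1,1,1:])),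
    ((3,1,1,4),([:0,0,-1,-1:],[:0,0,0,1:],[:-1,-1,-1,-1:],[:1,1,1,1:])),
    ((4,0,2,4),([:1,1,1,1:],0,[:1,1:],[:0,-1:])),
    ((4,0,3,4),([:1,1,1,1:],0,[:1,1,1:],[:0,0,-1:])),
    ((2,3,1,2),([:0,0,1,1:],[:1,1,1:],[:0,0,1:],[:1,1:])),
    ((3,0,1,2),([:-1,-1:],[:1,2,1,1:],[:0,0,1:],[:1,1:])),
    ((4,4,2,1),([:-1:],[:1,1,1,1:],[:0,1,1:],[:1:])),
    ((4,4,3,2),([:-1:],[:1,1,1,1:],[:0,1,1,1:],[:1,1:])),
    ((2,0,1,3),([:-1,-1,-1:],[:1,1,2,1:],[:0,0,0,1:],[:1,1,1:])),
    ((3,3,1,3),([:0,-1,-1:],[:0,1,1,1:],[:0,0,0,1:],[:1,1,1:])),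
    ((4,1,2,2),([:0,0,0,-1:],[:0,0,0,1:],[:0,-1,-1,-1:],[:0,0,1,1:])),
    ((4,1,3,1),([:0,0,0,-1:],[:0,0,0,1:],[:0,0,-1,-1:],[:0,0,0,1:])),
    ((2,1,2,4),([:0,1,1:],[:1:],[:1,1:],[:0,-1:])),
    ((2,4,3,4),([:0,1,1:],[:0,0,-1:],[:1,1,1:],[:0,0,-1:])),
    ((4,3,2,3),([:0,-1:],[:0,1,1,1:],[:0,0,1,1:],[:1,1,1:])),
    ((4,3,3,0),([:0,-1:],[:0,1,1,1:],[:-1,-1:],[:1,2,1,1:])),
    ((2,3,2,1),([:0,0,1,1:],[:1,1,1:],[:0,1,1:],[:1:])),
    ((2,1,3,2),([:0,0,1,1:],[:0,1:],[:0,1,1,1:],[:1,1:])),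
    ((4,2,2,0),([:0,0,-1:],[:0,0,1,1:],[:-1,-1,-1:],[:1,1,2,1:])),
    ((4,2,3,3),([:0,0,-1:],[:0,0,1,1:],[:0,-1,-1:],[:0,1,1,1:])),
    ((2,4,2,2),([:1,1:],[:0,-1:],[:0,-1,-1,-1:],[:0,0,1,1:])),
    ((2,2,3,1),([:1,1:],[:-1,-1,-1:],[:0,0,-1,-1:],[:0,0,0,1:])),
    ((0,2,2,4),([:1,2,1,1:],[:0,-1,-1,-1:],[:1,1:],[:0,-1:])),
    ((0,3,3,4),([:1,1,2,1:],[:0,0,-1,-1:],[:1,1,1:],[:0,0,-1:])),
    ((2,0,2,3),([:-1,-1,-1:],[:1,1,2,1:],[:0,0,1,1:],[:1,1,1:])),
    ((2,3,3,0),([:-1,-1,-1:],[:0,1,1,1:],[:-1,-1:],[:1,2,1,1:])),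
    ((0,3,3,2),([:-1,0,0,1:],[:1,1,1:],[:0,1,1,1:],[:1,1:])),
    ((2,2,2,0),([:0,-1,-1,-1:],[:0,0,1,1:],[:-1,-1,-1:],[:1,1,2,1:])),
    ((2,0,3,3),([:0,-1,-1,-1:],[:-1,0,0,1:],[:0,-1,-1:],[:0,1,1,1:])),
    ((0,2,2,2),([:1,0,0,-1:],[:-1,-1,-1:],[:0,-1,-1,-1:],[:0,0,1,1:])),
    ((3,1,0,2),([:0,1,1,1:],[:1:],[:1,2,1,1:],[:0,-1,-1,-1:])),
    ((2,1,0,3),([:0,0,1,1:],[:0,1:],[:1,1,2,1:],[:0,0,-1,-1:])),
    ((0,3,3,0),([:-1,-2,-1,-1:],[:0,1,1,1:],[:-1,-1:],[:1,2,1,1:])),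
    ((2,3,0,3),([:-1,-1,-1:],[:0,1,1,1:],[:-1,0,0,1:],[:1,1,1:])),
    ((3,3,0,2),([:1,1,1:],[:0,-1,-1:],[:1,0,0,-1:],[:-1,-1,-1:])),
    ((2,0,0,3),([:0,-1,-1,-1:],[:-1,0,0,1:],[:-1,-2,-1,-1:],[:0,1,1,1:]))]"

definition certificate5 :: "(nat \<times> int \<times> nat) list list" where
  "certificate5 = [[(1,1,0),(2,1,0),(3,1,0),(3,-1,1)],
    [(4,1,0),(0,1,0),(5,1,0),(5,-1,1)],
    [(0,1,0),(6,1,0),(7,1,0),(7,-1,1)],
    [(8,1,0),(9,1,0),(0,-1,4),(0,1,0)],
    [(6,1,0),(1,1,0),(10,1,0),(10,-1,1)],
    [(11,1,0),(12,1,0),(1,-1,4),(1,1,0)],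
    [(2,1,0),(4,1,0),(13,1,0),(13,-1,1)],
    [(14,1,0),(15,1,0),(2,-1,4),(2,1,0)],
    [(16,1,0),(3,1,0),(15,1,1),(15,-1,2)],
    [(3,1,0),(17,1,0),(11,-1,3),(11,1,4)],
    [(18,1,0),(19,1,0),(4,-1,4),(4,1,0)],
    [(20,1,0),(5,1,0),(9,1,1),(9,-1,2)],
    [(5,1,0),(21,1,0),(18,-1,3),(18,1,4)],
    [(22,1,0),(23,1,0),(6,-1,4),(6,1,0)],
    [(24,1,0),(7,1,0),(23,1,1),(23,-1,2)],
    [(7,1,0),(25,1,0),(8,-1,3),(8,1,4)],
    [(17,1,0),(8,1,0),(26,1,0),(26,-1,1)],
    [(9,1,0),(16,1,0),(27,1,0),(27,-1,1)],
    [(28,1,0),(10,1,0),(12,1,1),(12,-1,2)],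
    [(10,1,0),(29,1,0),(22,-1,3),(22,1,4)],
    [(21,1,0),(11,1,0),(30,1,0),(30,-1,1)],
    [(12,1,0),(20,1,0),(31,1,0),(31,-1,1)],
    [(32,1,0),(13,1,0),(19,1,1),(19,-1,2)],
    [(13,1,0),(33,1,0),(14,-1,3),(14,1,4)],
    [(25,1,0),(14,1,0),(34,1,0),(34,-1,1)],
    [(15,1,0),(24,1,0),(35,1,0),(35,-1,1)],
    [(35,-1,3),(36,1,0),(16,-1,4),(16,1,0)],
    [(37,1,0),(30,-1,2),(17,-1,4),(17,1,0)],
    [(29,1,0),(18,1,0),(38,1,0),(38,-1,1)],
    [(19,1,0),(28,1,0),(39,1,0),(39,-1,1)],
    [(27,-1,3),(40,1,0),(20,-1,4),(20,1,0)],
    [(41,1,0),(38,-1,2),(21,-1,4),(21,1,0)],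
    [(33,1,0),(22,1,0),(42,1,0),(42,-1,1)],
    [(23,1,0),(32,1,0),(43,1,0),(43,-1,1)],
    [(43,-1,3),(44,1,0),(24,-1,4),(24,1,0)],
    [(45,1,0),(26,-1,2),(25,-1,4),(25,1,0)],
    [(26,1,0),(46,1,0),(37,-1,3),(37,1,4)],
    [(47,1,0),(27,1,0),(36,1,1),(36,-1,2)],
    [(31,-1,3),(48,1,0),(28,-1,4),(28,1,0)],
    [(49,1,0),(42,-1,2),(29,-1,4),(29,1,0)],
    [(30,1,0),(47,-1,3),(41,-1,3),(41,1,4)],
    [(50,1,0),(31,1,0),(40,1,1),(40,-1,2)],
    [(39,-1,3),(51,1,0),(32,-1,4),(32,1,0)],
    [(52,1,0),(34,-1,2),(33,-1,4),(33,1,0)],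
    [(34,1,0),(53,1,0),(45,-1,3),(45,1,4)],
    [(46,-1,2),(35,1,0),(44,1,1),(44,-1,2)],
    [(36,1,0),(45,-1,3),(54,1,0),(54,-1,1)],
    [(40,-1,2),(37,1,0),(55,1,0),(55,-1,1)],
    [(38,1,0),(50,-1,3),(49,-1,3),(49,1,4)],
    [(56,1,0),(39,1,0),(48,1,1),(48,-1,2)],
    [(48,-1,2),(41,1,0),(57,1,0),(57,-1,1)],
    [(42,1,0),(56,-1,3),(52,-1,3),(52,1,4)],
    [(53,-1,2),(43,1,0),(51,1,1),(51,-1,2)],
    [(44,1,0),(52,-1,3),(58,1,0),(58,-1,1)],
    [(58,1,1),(55,-1,2),(46,-1,4),(46,1,0)],
    [(54,-1,3),(57,1,4),(47,-1,4),(47,1,0)],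
    [(51,-1,2),(49,1,0),(59,1,0),(59,-1,1)],
    [(55,1,1),(59,1,4),(50,-1,4),(50,1,0)],
    [(59,-1,4),(54,1,4),(53,-1,4),(53,1,0)],
    [(57,1,1),(58,-1,1),(56,-1,4),(56,1,0)]]"

lemma table_certificate_2: "table_certificate 2 [:1, 1:] table2 certificate2"
  by code_simp

lemma table_certificate_3: "table_certificate 3 [:1, 1, 1:] table3 certificate3"
  by code_simp

lemma table_certificate_4: "table_certificate 4 [:1, 0, 1:] table4 certificate4"
  by code_simp

lemma table_certificate_5: "table_certificate 5 [:1, 1, 1, 1, 1:] table5 certificate5"
  by code_simp

lemma cyclotomic_cofactors:
  "(monom 1 1 - 1) * [:1, 1:] = (monom 1 2 - 1 :: int poly)"
  "(monom 1 1 - 1) * [:1, 1, 1:] = (monom 1 3 - 1 :: int poly)"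
  "(monom 1 2 - 1) * [:1, 0, 1:] = (monom 1 4 - 1 :: int poly)"
  "(monom 1 1 - 1) * [:1, 1, 1, 1, 1:] = (monom 1 5 - 1 :: int poly)"
  by code_simp+

lemma certificate_exists:
  assumes "n \<in> {2, 3, 4, 5}" and "primitive_root_of_unity n z"
  obtains F table cert
  where "table_certificate n F table cert" "lead_coeff F = 1" "eval_int_poly z F = 0"
proof -
  from assms(1) consider "n = 2" | "n = 3" | "n = 4" | "n = 5"
    by blast
  then show ?thesis
  proof cases
    case 1
    then show ?thesis
      using that[of "[:1, 1:]" table2 certificate2] table_certificate_2
        eval_int_poly_cofactor_root[OF assms(2)[unfolded 1] _ _ cyclotomic_cofactors(1)]
      by simp
  next
    case 2
    then show ?thesis
      using that[of "[:1, 1, 1:]" table3 certificate3] table_certificate_3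
        eval_int_poly_cofactor_root[OF assms(2)[unfolded 2] _ _ cyclotomic_cofactors(2)]
      by simp
  next
    case 3
    then show ?thesis
      using that[of "[:1, 0, 1:]" table4 certificate4] table_certificate_4
        eval_int_poly_cofactor_root[OF assms(2)[unfolded 3] _ _ cyclotomic_cofactors(3)]
      by simp
  next
    case 4
    then show ?thesis
      using that[of "[:1, 1, 1, 1, 1:]" table5 certificate5] table_certificate_5
        eval_int_poly_cofactor_root[OF assms(2)[unfolded 4] _ _ cyclotomic_cofactors(4)]
      by simp
  qed
qed

theorem corollary3p9:
  fixes n :: nat and \<zeta> :: complex and M :: "complex \<Rightarrow> complex^2^2"
  assumes "n \<in> {2,3,4,5}"
    and "primitive_root_of_unity n \<zeta>"
    and "M \<in> Gq"
    and "\<exists>\<epsilon>::int. \<epsilon> \<in> {1, -1} \<and> (\<exists>a b c d :: int.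
           M 1 = mat2 (of_int a) (of_int b) (of_int c) (of_int d) \<and>
           [a = \<epsilon>] (mod int n) \<and> [b = 0] (mod int n) \<and>
           [c = 0] (mod int n) \<and> [d = \<epsilon>] (mod int n))"
  shows "\<exists>\<epsilon>::complex. \<epsilon> \<in> {1, -1} \<and> (\<exists>j<n.
           M \<zeta> $ 1 $ 1 = \<epsilon> * \<zeta> ^ j \<and> M \<zeta> $ 2 $ 2 = \<epsilon> * \<zeta> ^ j \<and>
           M \<zeta> $ 1 $ 2 = 0 \<and> M \<zeta> $ 2 $ 1 = 0)"
proof -
  have root: "\<zeta> ^ n = 1" "0 < n"
    using assms(2) by (auto simp: primitive_root_of_unity_def)
  then have "\<zeta> \<noteq> 0"
    by (cases n) auto
  obtain w where w: "\<And>q. q \<noteq> 0 \<Longrightarrow> M q = word_mat w q"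
    using assms(3) by (auto simp: Gq_def)
  obtain F table cert where cert: "table_certificate n F table cert"
    "lead_coeff F = 1" "eval_int_poly \<zeta> F = 0"
    using certificate_exists[OF assms(1,2)] .
  obtain \<epsilon> a b c d where "\<epsilon> \<in> {1, -1}"
    and M1: "M 1 = mat2 (of_int a) (of_int b) (of_int c) (of_int d)"
    and "[a = \<epsilon>] (mod int n)" "[b = 0] (mod int n)" "[c = 0] (mod int n)" "[d = \<epsilon>] (mod int n)"
    using assms(4) by blast
  moreover have "word_zmat w = (a, b, c, d)"
    using M1 w[of 1] by (simp add: word_mat_1 zmat2_to_mat_eq_mat2_iff)
  ultimately have "zmat2_cong_pm n (word_zmat w) (1, 0, 0, 1)"
    unfolding zmat2_cong_pm_def cong_def by auto
  with cert root have "pm_power_multiple \<zeta> (word_mat w \<zeta>) (mat 1)"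
    by (rule table_certificate_scalar_if_cong_identity)
  then obtain s j where s: "s \<in> {1, -1}" and "M \<zeta> = mat (of_int s * \<zeta> ^ j)"
    unfolding pm_power_multiple_def matrix_mul_rid w[OF \<open>\<zeta> \<noteq> 0\<close>, symmetric] by blast
  then have "M \<zeta> = mat (of_int s * \<zeta> ^ (j mod n))"
    by (simp add: power_mod_eq_if_power_eq_1[OF root(1)])
  then show ?thesis
    using s root(2) by (auto simp: mat_eq_mat2 mat2_def intro!: exI[of _ "of_int s"] exI[of _ "j mod n"])
qed

end
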